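(* Let $n\ge 2$, let $\Lambda$ be a positive integer, and let $V_\Lambda$ be the symmetric irreducible representation of $gl(n)$ (equivalently of $sl(n)$) whose highest weight corresponds to the Young tableau with row lengths $l_1=\Lambda$, $l_2=\dots=l_n=0$. Let $\widehat e^{\pm}_i$ ($i=1,\dots,n-1$) and $N_1,\dots,N_n$ be the crystal-basis generators of $gl(n)_{q\to 0}$ acting on $V_\Lambda$, as described in the context. Define, for $i=1,\dots,n-1$, $$E^{+}_{i}=\widehat e^{+}_{i}\,\sqrt{(N_i+1)\,N_{i+1}},\qquad E^{-}_{i}=\sqrt{(N_i+1)\,N_{i+1}}\;\widehat e^{-}_{i},\qquad H_i=N_i-N_{i+1}.$$ Then, as operators on $V_\Lambda$, these satisfy the defining relations of $sl(n)$ in the Cartan–Chevalley basis: $[H_i,E^{\pm}_j]=\pm a_{ji}E^{\pm}_j$, $[E^+_i,E^-_j]=\delta_{ij}H_i$, $[H_i,H_j]=0$, and the Serre relations $$\sum_{0\le m\le 1-a_{ij}}(-1)^m\binom{1-a_{ij}}{m}(E^{\pm}_i)^{1-a_{ij}-m}E^{\pm}_j(E^{\pm}_i)^m=0\quad(i\neq j),$$ where $(a_{ij})$ is the Cartan matrix of $sl(n)$, $a_{ii}=2$, $a_{ij}=-(\delta_{i-1,j}+\delta_{i,j-1})$ for $i\ne j$.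
   Context: For $q$ not a root of unity, $gl(n)_q$ is generated by $e^{\pm}_k$ ($k=1,\dots,n-1$) and $N_1,\dots,N_n$ with $[e^+_k,e^-_j]=\delta_{kj}[N_k-N_{k+1}]_q$, $[N_i,N_k]=0$, $[N_i,e^{\pm}_j]=\pm(\delta_{i,j}-\delta_{i-1,j})e^{\pm}_j$ and the $q$-Serre relations, where $[x]_q=(q^x-q^{-x})/(q-q^{-1})$. By Kashiwara's theory of crystal bases, in the limit $q\to 0$ there are operators $\widehat e^{\pm}_i$ (the crystal-basis generators) and a basis $\{\psi(\vec\Lambda;\vec\lambda)\}$ of each highest-weight irreducible representation with highest weight $\vec\Lambda$ such that: $h_i=N_i-N_{i+1}$ acts diagonally, $h_i\psi(\vec\Lambda;\vec\lambda)=\lambda_i\psi(\vec\Lambda;\vec\lambda)$; $\widehat e^{\pm}_i\psi(\vec\Lambda;\vec\lambda)=\psi(\vec\Lambda;\vec\lambda\pm\vec a_i)$ with $(\vec\lambda\pm\vec a_i)_j=\lambda_j\pm a_{ij}$, except that $\widehat e^+_i$ annihilates the states $\psi(\vec\Lambda;\vec\Lambda_i)$ at the top of the $i$-string and $\widehat e^-_i$ annihilates the states $\psi(\vec\Lambda;-\vec\Lambda_i)$ at the bottom of the $i$-string; consequently $\widehat e^+_i\widehat e^-_i$ (resp. $\widehat e^-_i\widehat e^+_i$) acts as the identity on all basis states not annihilated by $\widehat e^-_i$ (resp. $\widehat e^+_i$). Each basis state corresponds to a Young tableau with row lengths $l_1,\dots,l_n$ and is an eigenvector of $N_i$ with eigenvalue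 $l_i$, and $[N_i,\widehat e^{\pm}_k]=\pm(\delta_{i,k}-\delta_{i-1,k})\widehat e^{\pm}_k$. Square roots of functions of the commuting diagonal operators $N_i$ are taken on eigenvalues. *)

theory Defs
  imports Complex_Main
begin

text \<open>A state is a semistandard one-row tableau,
encoded by its occupation numbers: k i = number of boxes filled with i
(i = 1..n), k i = 0 outside 1..n, and the total is Lambda.\<close>

type_synonym state = "nat \<Rightarrow> nat"
type_synonym vec = "state \<Rightarrow> real"
type_synonym op = "vec \<Rightarrow> vec"

definition states :: "nat \<Rightarrow> nat \<Rightarrow> state set" where
  "states n Lam = {k. (\<forall>j. j \<notin> {1..n} \<longrightarrow> k j = 0) \<and> (\<Sum>j=1..n. k j) = Lam}"

definition Vsp :: "nat \<Rightarrow> nat \<Rightarrow> vec set" where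
  "Vsp n Lam = {v. \<forall>k. k \<notin> states n Lam \<longrightarrow> v k = 0}"

text \<open>Linear extension of a partial map on basis states (None = annihilation).\<close>
definition basis_op :: "nat \<Rightarrow> nat \<Rightarrow> (state \<Rightarrow> state option) \<Rightarrow> op" where
  "basis_op n Lam f v = (\<lambda>k'. \<Sum>k\<in>states n Lam. if f k = Some k' then v k else 0)"

text \<open>Diagonal operator (function of the commuting N_i, taken on eigenvalues).\<close>
definition diag_op :: "(state \<Rightarrow> real) \<Rightarrow> op" where
  "diag_op g v = (\<lambda>k. g k * v k)"

text \<open>Crystal-basis generators at q -> 0 on V_Lambda: e^+_i replaces an entry
i+1 by i, e^-_i replaces an entry i by i+1; they annihilate the top,
resp. bottom, of the i-string.\<close>
definition crys_plus :: "nat \<Rightarrow> state \<Rightarrow> state option" where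
  "crys_plus i k = (if 0 < k (i+1) then Some (k(i := k i + 1, i+1 := k (i+1) - 1)) else None)"

definition crys_minus :: "nat \<Rightarrow> state \<Rightarrow> state option" where
  "crys_minus i k = (if 0 < k i then Some (k(i := k i - 1, i+1 := k (i+1) + 1)) else None)"

definition ehat_plus :: "nat \<Rightarrow> nat \<Rightarrow> nat \<Rightarrow> op" where
  "ehat_plus n Lam i = basis_op n Lam (crys_plus i)"

definition ehat_minus :: "nat \<Rightarrow> nat \<Rightarrow> nat \<Rightarrow> op" where
  "ehat_minus n Lam i = basis_op n Lam (crys_minus i)"

definition Nop :: "nat \<Rightarrow> op" where
  "Nop i = diag_op (\<lambda>k. real (k i))"

definition Eplus :: "nat \<Rightarrow> nat \<Rightarrow> nat \<Rightarrow> op" where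
  "Eplus n Lam i = ehat_plus n Lam i \<circ> diag_op (\<lambda>k. sqrt ((real (k i) + 1) * real (k (i+1))))"

definition Eminus :: "nat \<Rightarrow> nat \<Rightarrow> nat \<Rightarrow> op" where
  "Eminus n Lam i = diag_op (\<lambda>k. sqrt ((real (k i) + 1) * real (k (i+1)))) \<circ> ehat_minus n Lam i"

definition Hop :: "nat \<Rightarrow> op" where
  "Hop i = diag_op (\<lambda>k. real (k i) - real (k (i+1)))"

definition comm :: "op \<Rightarrow> op \<Rightarrow> op" where
  "comm A B v = (\<lambda>k. A (B v) k - B (A v) k)"

definition cartan :: "nat \<Rightarrow> nat \<Rightarrow> int" where
  "cartan i j = (if i = j then 2 else if j = i - 1 \<or> j = i + 1 then -1 else 0)"

definition serre :: "op \<Rightarrow> op \<Rightarrow> int \<Rightarrow> op" where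
  "serre A B a v = (\<lambda>k. \<Sum>m = 0..nat (1 - a).
      (-1) ^ m * real (nat (1 - a) choose m) * (A ^^ (nat (1 - a) - m)) (B ((A ^^ m) v)) k)"

end

theory Submission
  imports Defs
begin

(* A one-row tableau is determined by its occupation numbers k_1, ..., k_n, and in this basis
   E^+_i and E^-_i act as the Jordan-Schwinger bilinears a_i^+ a_(i+1) and a_(i+1)^+ a_i of n
   bosonic oscillators, while H_i = N_i - N_(i+1).  Such bilinears satisfy
     [a_a^+ a_b, a_c^+ a_d] = delta_bc a_a^+ a_d - delta_ad a_c^+ a_b,
   which yields the Chevalley relations at once.  For adjacent i, j the Serre relation is
   [E_i, [E_i, E_j]] = 0, and it holds because [E_i, E_j] = +- a_a^+ a_c again commutes with E_i.
   All of this is computed on arbitrary functions of occupation numbers; V_Lambda is invariant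
   under the bilinears, so the identities restrict to it. *)

definition move :: "nat \<Rightarrow> nat \<Rightarrow> state \<Rightarrow> state" where
  "move a b k = k(a := k a - 1, b := k b + 1)"

(* hop a b is a_a^+ a_b.  The truncated subtraction in move is harmless: the weight vanishes
   when k a = 0. *)
definition hop :: "nat \<Rightarrow> nat \<Rightarrow> op" where
  "hop a b v k = sqrt (real (k a) * (real (k b) + 1)) * v (move a b k)"

lemma sqrt_mult_common_factor:
  "0 \<le> y \<Longrightarrow> sqrt (x * y) * sqrt (y * z) = y * sqrt (x * z)"
proof -
  assume "0 \<le> y"
  then have "sqrt y * sqrt y = y" by simp
  then show ?thesis by (simp add: real_sqrt_mult ac_simps)
qed

lemma comm_hop_hop:
  assumes "a \<noteq> b" "c \<noteq> d" "b \<noteq> c" "a \<noteq> d"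
  shows "comm (hop a b) (hop c d) v = (\<lambda>k. 0)"
proof -
  have moves: "move a b (move c d k) = move c d (move a b k)" for k
    using assms by (auto simp: move_def fun_eq_iff)
  have weights: "sqrt (real (k a) * (real (k b) + 1)) * sqrt (real (move a b k c) * (real (move a b k d) + 1))
      = sqrt (real (k c) * (real (k d) + 1)) * sqrt (real (move c d k a) * (real (move c d k b) + 1))" for k
    using assms by (cases "k a"; cases "k c") (auto simp: move_def real_sqrt_mult[symmetric] algebra_simps)
  show ?thesis
    unfolding comm_def hop_def by (simp add: mult.assoc[symmetric] weights moves)
qed

lemma comm_hop_chain:
  assumes "a \<noteq> b" "b \<noteq> c" "a \<noteq> c"
  shows "comm (hop a b) (hop b c) = hop a c"
proof (intro ext)
  fix v k
  have ab_bc: "hop a b (hop b c v) k = (real (k b) + 1) * hop a c v k"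
  proof -
    have "real (move a b k b) = real (k b) + 1" "move a b k c = k c"
      "move b c (move a b k) = move a c k"
      using assms by (auto simp: move_def fun_eq_iff)
    then have "hop a b (hop b c v) k
        = sqrt (real (k a) * (real (k b) + 1)) * sqrt ((real (k b) + 1) * (real (k c) + 1)) * v (move a c k)"
      unfolding hop_def by (simp only: mult.assoc)
    then show ?thesis
      by (simp add: sqrt_mult_common_factor hop_def)
  qed
  have bc_ab: "hop b c (hop a b v) k = real (k b) * hop a c v k"
  proof (cases "k b = 0")
    case False
    then have "real (move b c k b) + 1 = real (k b)" "move b c k a = k a"
      "move a b (move b c k) = move a c k"
      using assms by (auto simp: move_def fun_eq_iff)
    then have "hop b c (hop a b v) k
        = sqrt (real (k a) * real (k b)) * sqrt (real (k b) * (real (k c) + 1)) * v (move a c k)"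
      unfolding hop_def by (simp only: ac_simps)
    then show ?thesis
      by (simp add: sqrt_mult_common_factor hop_def)
  qed (simp add: hop_def)
  show "comm (hop a b) (hop b c) v k = hop a c v k"
    by (simp add: comm_def ab_bc bc_ab algebra_simps)
qed

lemma hop_hop_swap:
  assumes "a \<noteq> b"
  shows "hop a b (hop b a v) k = real (k a) * (real (k b) + 1) * v k"
proof (cases "k a = 0")
  case False
  then have "real (move a b k b) = real (k b) + 1" "real (move a b k a) + 1 = real (k a)"
    "move b a (move a b k) = k"
    using assms by (auto simp: move_def fun_eq_iff)
  then have "hop a b (hop b a v) k
      = sqrt (real (k a) * (real (k b) + 1)) * sqrt ((real (k b) + 1) * real (k a)) * v k"
    unfolding hop_def by (simp only: mult.assoc)
  then show ?thesis
    by (simp add: sqrt_mult_common_factor mult.commute)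
qed (simp add: hop_def)

lemma comm_hop_swap:
  assumes "a \<noteq> b"
  shows "comm (hop a b) (hop b a) v = diag_op (\<lambda>k. real (k a) - real (k b)) v"
  using assms by (simp add: comm_def diag_op_def hop_hop_swap fun_eq_iff algebra_simps)

lemma hop_eq_0: "k a = 0 \<Longrightarrow> hop a b v k = 0"
  by (simp add: hop_def)

lemma comm_diag_op_hop:
  "comm (diag_op g) (hop a b) v = (\<lambda>k. (g k - g (move a b k)) * hop a b v k)"
  by (simp add: comm_def diag_op_def hop_def fun_eq_iff algebra_simps)

lemma comm_diag_op_diag_op: "comm (diag_op f) (diag_op g) v = (\<lambda>k. 0)"
  by (simp add: comm_def diag_op_def)

lemma comm_Hop_hop_raising:
  "comm (Hop i) (hop j (j+1)) v = (\<lambda>k. of_int (cartan j i) * hop j (j+1) v k)"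
proof
  fix k
  show "comm (Hop i) (hop j (j+1)) v k = of_int (cartan j i) * hop j (j+1) v k"
  proof (cases "k j = 0")
    case False
    then have "(real (k i) - real (k (i+1))) - (real (move j (j+1) k i) - real (move j (j+1) k (i+1)))
        = of_int (cartan j i)"
      by (auto simp: move_def cartan_def of_nat_diff)
    then show ?thesis
      unfolding Hop_def comm_diag_op_hop by simp
  qed (simp add: Hop_def comm_diag_op_hop hop_eq_0)
qed

lemma comm_Hop_hop_lowering:
  "comm (Hop i) (hop (j+1) j) v = (\<lambda>k. - of_int (cartan j i) * hop (j+1) j v k)"
proof
  fix k
  show "comm (Hop i) (hop (j+1) j) v k = - of_int (cartan j i) * hop (j+1) j v k"
  proof (cases "k (j+1) = 0")
    case False
    then have "(real (k i) - real (k (i+1))) - (real (move (j+1) j k i) - real (move (j+1) j k (i+1)))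
        = - of_int (cartan j i)"
      by (auto simp: move_def cartan_def of_nat_diff)
    then show ?thesis
      unfolding Hop_def comm_diag_op_hop by simp
  qed (simp add: Hop_def comm_diag_op_hop hop_eq_0)
qed

lemma hop_diff: "hop a b (\<lambda>k. u k - w k) = (\<lambda>k. hop a b u k - hop a b w k)"
  by (simp add: hop_def fun_eq_iff right_diff_distrib)

lemma serre_zero: "serre A B 0 v = comm A B v"
  by (simp add: serre_def comm_def)

lemma serre_minus_one:
  assumes "\<And>u w. A (\<lambda>k. u k - w k) = (\<lambda>k. A u k - A w k)"
  shows "serre A B (-1) v = comm A (comm A B) v"
    and "serre A B (-1) v = comm (comm B A) A v"
  using assms by (simp_all add: serre_def comm_def numeral_2_eq_2 fun_eq_iff)

lemma serre_hop_chain: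
  assumes "a \<noteq> b" "b \<noteq> c" "a \<noteq> c"
  shows "serre (hop a b) (hop b c) (-1) v = (\<lambda>k. 0)"
    and "serre (hop b c) (hop a b) (-1) v = (\<lambda>k. 0)"
proof -
  show "serre (hop a b) (hop b c) (-1) v = (\<lambda>k. 0)"
    unfolding serre_minus_one(1)[OF hop_diff] comm_hop_chain[OF assms]
    using assms by (simp add: comm_hop_hop)
  show "serre (hop b c) (hop a b) (-1) v = (\<lambda>k. 0)"
    unfolding serre_minus_one(2)[OF hop_diff] comm_hop_chain[OF assms]
    using assms by (simp add: comm_hop_hop)
qed

lemma serre_hop_raising:
  assumes "i \<noteq> j"
  shows "serre (hop i (i+1)) (hop j (j+1)) (cartan i j) v = (\<lambda>k. 0)"
proof -
  consider "j = i+1" | "i = j+1" | "j \<noteq> i+1" "i \<noteq> j+1" by blast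
  then show ?thesis
  proof cases
    case 1
    then show ?thesis using serre_hop_chain(1)[of i "i+1" "i+2"] by (simp add: cartan_def)
  next
    case 2
    then show ?thesis using serre_hop_chain(2)[of j "j+1" "j+2"] by (simp add: cartan_def)
  next
    case 3
    then have "cartan i j = 0"
      using assms by (auto simp: cartan_def)
    with 3 assms show ?thesis by (simp add: serre_zero comm_hop_hop)
  qed
qed

lemma serre_hop_lowering:
  assumes "i \<noteq> j"
  shows "serre (hop (i+1) i) (hop (j+1) j) (cartan i j) v = (\<lambda>k. 0)"
proof -
  consider "j = i+1" | "i = j+1" | "j \<noteq> i+1" "i \<noteq> j+1" by blast
  then show ?thesis
  proof cases
    case 1
    then show ?thesis using serre_hop_chain(2)[of "i+2" "i+1" i] by (simp add: cartan_def)
  next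
    case 2
    then show ?thesis using serre_hop_chain(1)[of "j+2" "j+1" j] by (simp add: cartan_def)
  next
    case 3
    then have "cartan i j = 0"
      using assms by (auto simp: cartan_def)
    with 3 assms show ?thesis by (simp add: serre_zero comm_hop_hop)
  qed
qed

lemma sum_move:
  assumes "finite A" "a \<in> A" "b \<in> A" "a \<noteq> b" "1 \<le> k a"
  shows "sum (move a b k) A = sum k A"
proof -
  have split: "sum f A = f a + f b + sum f (A - {a} - {b})" for f :: "state"
    using assms by (simp add: sum.remove[of A a] sum.remove[of "A - {a}" b] add.assoc)
  have "sum (move a b k) (A - {a} - {b}) = sum k (A - {a} - {b})"
    by (rule sum.cong) (auto simp: move_def)
  then show ?thesis
    unfolding split[of "move a b k"] split[of k] using assms by (simp add: move_def)
qed

lemma move_states_iff: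
  assumes "a \<in> {1..n}" "b \<in> {1..n}" "a \<noteq> b" "1 \<le> k a"
  shows "move a b k \<in> states n Lam \<longleftrightarrow> k \<in> states n Lam"
  using assms sum_move[of "{1..n}" a b k] unfolding states_def by (auto simp: move_def)

lemma finite_states: "finite (states n Lam)"
proof (rule finite_subset)
  show "states n Lam \<subseteq> {k. \<forall>j. (j \<in> {1..n} \<longrightarrow> k j \<in> {0..Lam}) \<and> (j \<notin> {1..n} \<longrightarrow> k j = 0)}"
    unfolding states_def using member_le_sum[of _ "{1..n}"] by fastforce
qed (intro finite_set_of_finite_funs; simp)

lemma hop_Vsp:
  assumes "a \<in> {1..n}" "b \<in> {1..n}" "a \<noteq> b" "v \<in> Vsp n Lam"
  shows "hop a b v \<in> Vsp n Lam"
  unfolding Vsp_def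
proof (intro CollectI allI impI)
  fix k assume "k \<notin> states n Lam"
  then show "hop a b v k = 0"
    using assms move_states_iff[of a n b k Lam] unfolding Vsp_def
    by (cases "k a = 0") (auto simp: hop_eq_0 hop_def)
qed

lemma diag_op_Vsp: "v \<in> Vsp n Lam \<Longrightarrow> diag_op g v \<in> Vsp n Lam"
  by (simp add: Vsp_def diag_op_def)

lemma basis_op_apply:
  assumes "\<And>k0. f k0 = Some k \<longleftrightarrow> P \<and> k0 = g" "v \<in> Vsp n Lam"
  shows "basis_op n Lam f v k = (if P then v g else 0)"
proof -
  have "basis_op n Lam f v k = (\<Sum>k0\<in>states n Lam. if P \<and> k0 = g then v k0 else 0)"
    unfolding basis_op_def assms(1) ..
  also have "\<dots> = (if P \<and> g \<in> states n Lam then v g else 0)"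
    by (cases P) (simp_all add: finite_states)
  also have "\<dots> = (if P then v g else 0)"
    using assms(2) by (auto simp: Vsp_def)
  finally show ?thesis .
qed

lemma crys_plus_Some_iff: "crys_plus i k0 = Some k \<longleftrightarrow> 1 \<le> k i \<and> k0 = move i (i+1) k"
proof
  assume "crys_plus i k0 = Some k"
  then have "0 < k0 (i+1)" "k = k0(i := k0 i + 1, i+1 := k0 (i+1) - 1)"
    by (auto simp: crys_plus_def split: if_splits)
  then show "1 \<le> k i \<and> k0 = move i (i+1) k"
    by (auto simp: move_def fun_eq_iff)
next
  show "1 \<le> k i \<and> k0 = move i (i+1) k \<Longrightarrow> crys_plus i k0 = Some k"
    by (auto simp: crys_plus_def move_def fun_eq_iff)
qed

lemma crys_minus_Some_iff: "crys_minus i k0 = Some k \<longleftrightarrow> 1 \<le> k (i+1) \<and> k0 = move (i+1) i k"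
proof
  assume "crys_minus i k0 = Some k"
  then have "0 < k0 i" "k = k0(i := k0 i - 1, i+1 := k0 (i+1) + 1)"
    by (auto simp: crys_minus_def split: if_splits)
  then show "1 \<le> k (i+1) \<and> k0 = move (i+1) i k"
    by (auto simp: move_def fun_eq_iff)
next
  show "1 \<le> k (i+1) \<and> k0 = move (i+1) i k \<Longrightarrow> crys_minus i k0 = Some k"
    by (auto simp: crys_minus_def move_def fun_eq_iff)
qed

lemma Eplus_eq_hop:
  assumes "v \<in> Vsp n Lam"
  shows "Eplus n Lam i v = hop i (i+1) v"
proof
  fix k
  have "Eplus n Lam i v k = (if 1 \<le> k i
      then sqrt ((real (move i (i+1) k i) + 1) * real (move i (i+1) k (i+1))) * v (move i (i+1) k) else 0)"
    unfolding Eplus_def ehat_plus_def comp_apply basis_op_apply[OF crys_plus_Some_iff diag_op_Vsp[OF assms]]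
    by (simp add: diag_op_def)
  also have "\<dots> = hop i (i+1) v k"
    by (auto simp: hop_def move_def of_nat_diff)
  finally show "Eplus n Lam i v k = hop i (i+1) v k" .
qed

lemma Eminus_eq_hop:
  assumes "v \<in> Vsp n Lam"
  shows "Eminus n Lam i v = hop (i+1) i v"
proof
  fix k
  have "Eminus n Lam i v k
      = sqrt ((real (k i) + 1) * real (k (i+1))) * (if 1 \<le> k (i+1) then v (move (i+1) i k) else 0)"
    unfolding Eminus_def ehat_minus_def comp_apply basis_op_apply[OF crys_minus_Some_iff assms]
    by (simp add: diag_op_def)
  also have "\<dots> = hop (i+1) i v k"
    by (auto simp: hop_def mult.commute)
  finally show "Eminus n Lam i v k = hop (i+1) i v k" .
qed

definition acts_on_as :: "vec set \<Rightarrow> op \<Rightarrow> op \<Rightarrow> bool" where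
  "acts_on_as S A B \<longleftrightarrow> (\<forall>u\<in>S. A u = B u \<and> B u \<in> S)"

lemma funpow_acts_on_as:
  assumes "acts_on_as S A B" "u \<in> S"
  shows "(A ^^ m) u = (B ^^ m) u \<and> (B ^^ m) u \<in> S"
  using assms by (induction m) (auto simp: acts_on_as_def)

lemma comm_acts_on_as:
  assumes "acts_on_as S A A'" "acts_on_as S B B'" "v \<in> S"
  shows "comm A B v = comm A' B' v"
  using assms by (simp add: acts_on_as_def comm_def)

lemma serre_acts_on_as:
  assumes "acts_on_as S A A'" "acts_on_as S B B'" "v \<in> S"
  shows "serre A B c v = serre A' B' c v"
proof -
  have "(A ^^ m') (B ((A ^^ m) v)) = (A' ^^ m') (B' ((A' ^^ m) v))" for m m'
    using assms funpow_acts_on_as[OF assms(1)] by (simp add: acts_on_as_def)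
  then show ?thesis
    by (simp add: serre_def)
qed

lemma Eplus_acts_on_as_hop:
  "i \<in> {1..n-1} \<Longrightarrow> acts_on_as (Vsp n Lam) (Eplus n Lam i) (hop i (i+1))"
  by (auto simp: acts_on_as_def Eplus_eq_hop intro: hop_Vsp)

lemma Eminus_acts_on_as_hop:
  "i \<in> {1..n-1} \<Longrightarrow> acts_on_as (Vsp n Lam) (Eminus n Lam i) (hop (i+1) i)"
  by (auto simp: acts_on_as_def Eminus_eq_hop intro: hop_Vsp)

lemma Hop_acts_on_as: "acts_on_as (Vsp n Lam) (Hop i) (Hop i)"
  by (simp add: acts_on_as_def Hop_def diag_op_Vsp)

theorem mainTheorem1:
  fixes n Lam :: nat
  assumes "n \<ge> 2" and "Lam > 0"
  shows "\<forall>v \<in> Vsp n Lam. \<forall>i \<in> {1..n-1}. \<forall>j \<in> {1..n-1}.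
     comm (Hop i) (Eplus n Lam j) v = (\<lambda>k. of_int (cartan j i) * Eplus n Lam j v k) \<and>
     comm (Hop i) (Eminus n Lam j) v = (\<lambda>k. - of_int (cartan j i) * Eminus n Lam j v k) \<and>
     comm (Eplus n Lam i) (Eminus n Lam j) v = (if i = j then Hop i v else (\<lambda>k. 0)) \<and>
     comm (Hop i) (Hop j) v = (\<lambda>k. 0) \<and>
     (i \<noteq> j \<longrightarrow> serre (Eplus n Lam i) (Eplus n Lam j) (cartan i j) v = (\<lambda>k. 0)) \<and>
     (i \<noteq> j \<longrightarrow> serre (Eminus n Lam i) (Eminus n Lam j) (cartan i j) v = (\<lambda>k. 0))"
proof (intro ballI conjI impI)
  fix v i j
  assume v: "v \<in> Vsp n Lam" and i: "i \<in> {1..n-1}" and j: "j \<in> {1..n-1}"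
  note Ei = Eplus_acts_on_as_hop[OF i] Eminus_acts_on_as_hop[OF i]
  note Ej = Eplus_acts_on_as_hop[OF j] Eminus_acts_on_as_hop[OF j]
  show "comm (Hop i) (Eplus n Lam j) v = (\<lambda>k. of_int (cartan j i) * Eplus n Lam j v k)"
    by (simp only: comm_acts_on_as[OF Hop_acts_on_as Ej(1) v] comm_Hop_hop_raising Eplus_eq_hop[OF v])
  show "comm (Hop i) (Eminus n Lam j) v = (\<lambda>k. - of_int (cartan j i) * Eminus n Lam j v k)"
    by (simp only: comm_acts_on_as[OF Hop_acts_on_as Ej(2) v] comm_Hop_hop_lowering Eminus_eq_hop[OF v])
  show "comm (Eplus n Lam i) (Eminus n Lam j) v = (if i = j then Hop i v else (\<lambda>k. 0))"
    by (simp add: comm_acts_on_as[OF Ei(1) Ej(2) v] comm_hop_swap comm_hop_hop Hop_def)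
  show "comm (Hop i) (Hop j) v = (\<lambda>k. 0)"
    by (simp add: Hop_def comm_diag_op_diag_op)
  assume "i \<noteq> j"
  then show "serre (Eplus n Lam i) (Eplus n Lam j) (cartan i j) v = (\<lambda>k. 0)"
    and "serre (Eminus n Lam i) (Eminus n Lam j) (cartan i j) v = (\<lambda>k. 0)"
    unfolding serre_acts_on_as[OF Ei(1) Ej(1) v] serre_acts_on_as[OF Ei(2) Ej(2) v]
    by (rule serre_hop_raising, rule serre_hop_lowering)
qed

end
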